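(* Let $X$ be a $T_0$ $k$-bounded sober space and $x\in X$. If $E$ is an irreducible subset of $X$ whose supremum exists, with $\bigvee E\ge x$ and $E\subseteq\twoheaddownarrow_{\operatorname{Irr}} x$, then $\twoheaddownarrow_{\operatorname{Irr}} x$ is irreducible in $X$.
   Context: For a topological space $X$, a nonempty subset $E$ is irreducible if whenever $E\subseteq A_1\cup A_2$ with $A_1,A_2$ closed, $E\subseteq A_1$ or $E\subseteq A_2$. The specialisation order is $x\le y$ iff $x\in\operatorname{cl}(\{y\})$; $\uparrow x=\{z:z\ge x\}$; $\bigvee$ denotes supremum in this order. $\operatorname{Irr}^+(X)$ is the set of irreducible subsets whose supremum exists. $X$ is $k$-bounded sober if every closed set $F\in\operatorname{Irr}^+(X)$ is the closure of a unique singleton. $x\ll_{\operatorname{Irr}} y$ iff for every $E\in\operatorname{Irr}^+(X)$ with $\bigvee E\ge y$, $E\cap\uparrow x\ne\emptyset$; $\twoheaddownarrow_{\operatorname{Irr}} x=\{y:y\ll_{\operatorname{Irr}} x\}$. *)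

theory Defs
  imports "HOL-Analysis.Analysis"
begin

definition spec_le :: "'a topology \<Rightarrow> 'a \<Rightarrow> 'a \<Rightarrow> bool" where
  "spec_le X x y \<longleftrightarrow> x \<in> topspace X \<and> y \<in> topspace X \<and> x \<in> X closure_of {y}"

definition up_set :: "'a topology \<Rightarrow> 'a \<Rightarrow> 'a set" where
  "up_set X x = {z \<in> topspace X. spec_le X x z}"

definition irreducible_in :: "'a topology \<Rightarrow> 'a set \<Rightarrow> bool" where
  "irreducible_in X E \<longleftrightarrow> E \<noteq> {} \<and> E \<subseteq> topspace X \<and>
     (\<forall>A1 A2. closedin X A1 \<and> closedin X A2 \<and> E \<subseteq> A1 \<union> A2 \<longrightarrow> E \<subseteq> A1 \<or> E \<subseteq> A2)"

definition is_spec_sup :: "'a topology \<Rightarrow> 'a set \<Rightarrow> 'a \<Rightarrow> bool" where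
  "is_spec_sup X E s \<longleftrightarrow> s \<in> topspace X \<and> (\<forall>e\<in>E. spec_le X e s) \<and>
     (\<forall>u\<in>topspace X. (\<forall>e\<in>E. spec_le X e u) \<longrightarrow> spec_le X s u)"

definition spec_sup :: "'a topology \<Rightarrow> 'a set \<Rightarrow> 'a" where
  "spec_sup X E = (THE s. is_spec_sup X E s)"

definition Irr_plus :: "'a topology \<Rightarrow> 'a set set" where
  "Irr_plus X = {E. irreducible_in X E \<and> (\<exists>s. is_spec_sup X E s)}"

definition k_bounded_sober :: "'a topology \<Rightarrow> bool" where
  "k_bounded_sober X \<longleftrightarrow>
     (\<forall>F\<in>Irr_plus X. closedin X F \<longrightarrow> (\<exists>!x. x \<in> topspace X \<and> F = X closure_of {x}))"

definition way_below_Irr :: "'a topology \<Rightarrow> 'a \<Rightarrow> 'a \<Rightarrow> bool" where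
  "way_below_Irr X x y \<longleftrightarrow> x \<in> topspace X \<and> y \<in> topspace X \<and>
     (\<forall>E\<in>Irr_plus X. spec_le X y (spec_sup X E) \<longrightarrow> E \<inter> up_set X x \<noteq> {})"

definition ddown_Irr :: "'a topology \<Rightarrow> 'a \<Rightarrow> 'a set" where
  "ddown_Irr X x = {y \<in> topspace X. way_below_Irr X y x}"

end

theory Submission
  imports Defs
begin

text \<open>Every element way below x lies below some element of E, hence in the closure of E;
  and a set squeezed between an irreducible set and its closure is irreducible.\<close>

lemma irreducible_in_between_closure:
  assumes irr: "irreducible_in X E" and "E \<subseteq> D" and "D \<subseteq> X closure_of E"
  shows "irreducible_in X D"
  unfolding irreducible_in_def
proof (intro conjI allI impI)
  show "D \<noteq> {}" using irr \<open>E \<subseteq> D\<close> unfolding irreducible_in_def by blast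
  show "D \<subseteq> topspace X"
    using \<open>D \<subseteq> X closure_of E\<close> closure_of_subset_topspace by (rule order_trans)
next
  fix A1 A2 assume A: "closedin X A1 \<and> closedin X A2 \<and> D \<subseteq> A1 \<union> A2"
  then have "E \<subseteq> A1 \<union> A2" using \<open>E \<subseteq> D\<close> by (meson order_trans)
  then have "E \<subseteq> A1 \<or> E \<subseteq> A2" using A irr unfolding irreducible_in_def by simp
  then have "X closure_of E \<subseteq> A1 \<or> X closure_of E \<subseteq> A2"
    using A closure_of_minimal by meson
  with \<open>D \<subseteq> X closure_of E\<close> show "D \<subseteq> A1 \<or> D \<subseteq> A2" by (meson order_trans)
qed

lemma spec_le_in_closure_of:
  assumes "spec_le X y e" and "e \<in> E"
  shows "y \<in> X closure_of E"
proof -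
  have "X closure_of {e} \<subseteq> X closure_of E" using assms(2) by (intro closure_of_mono) simp
  then show ?thesis using assms(1) by (auto simp: spec_le_def)
qed

lemma ddown_Irr_subset_closure_of:
  assumes "E \<in> Irr_plus X" and "spec_le X x (spec_sup X E)"
  shows "ddown_Irr X x \<subseteq> X closure_of E"
proof
  fix y assume "y \<in> ddown_Irr X x"
  then have "E \<inter> up_set X y \<noteq> {}"
    using assms unfolding ddown_Irr_def way_below_Irr_def by blast
  then obtain e where "e \<in> E" "spec_le X y e" unfolding up_set_def by blast
  then show "y \<in> X closure_of E" by (intro spec_le_in_closure_of)
qed

theorem lemma4p5:
  fixes X :: "'a topology" and x :: 'a and E :: "'a set"
  assumes "t0_space X" and "k_bounded_sober X" and "x \<in> topspace X"
    and "E \<in> Irr_plus X"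
    and "spec_le X x (spec_sup X E)"
    and "E \<subseteq> ddown_Irr X x"
  shows "irreducible_in X (ddown_Irr X x)"
proof (rule irreducible_in_between_closure)
  show "irreducible_in X E" using assms(4) unfolding Irr_plus_def by blast
  show "E \<subseteq> ddown_Irr X x" by (fact assms(6))
  show "ddown_Irr X x \<subseteq> X closure_of E"
    using assms(4,5) by (rule ddown_Irr_subset_closure_of)
qed

end
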